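(* Consider a combinatorial auction with $2$ bidders and $2$ items $a,b$, where both bidders have general monotone valuations. Let $\mathcal M_3$ be the randomized mechanism that with probability $1/3$ runs an ascending second-price auction on the grand bundle $\{a,b\}$, and with probability $2/3$ allocates a uniformly random item to a uniformly random bidder and then runs an ascending second-price auction for the remaining item among both bidders. Then $\mathcal M_3$ achieves a $\frac{3}{2}$-approximation to the optimal social welfare: on every instance its expected welfare under truthful play is at least $\frac23\mathrm{OPT}$.
   Context: A valuation $v:2^{\{a,b\}}\to\mathbb{R}_{\ge0}$ is (general) monotone if $v(T)\le v(T')$ whenever $T\subseteq T'$. In the auction for the remaining item, each bidder bids her marginal value for that item given the bundle she already holds; the highest bidder wins. In the grand-bundle auction, the bidder with the highest value for $\{a,b\}$ wins both items. $\mathrm{OPT}$ is the maximum of $v_1(T_1)+v_2(T_2)$ over disjoint $T_1,T_2\subseteq\{a,b\}$. *)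

theory Defs
  imports Complex_Main
begin

datatype item = ItemA | ItemB

type_synonym valuation = "item set \<Rightarrow> real"

definition other_item :: "item \<Rightarrow> item" where
  "other_item x = (if x = ItemA then ItemB else ItemA)"

definition other_bidder :: "nat \<Rightarrow> nat" where
  "other_bidder i = (if i = 1 then 2 else 1)"

definition monotone_val :: "valuation \<Rightarrow> bool" where
  "monotone_val v \<longleftrightarrow> (\<forall>T. 0 \<le> v T) \<and> (\<forall>T T'. T \<subseteq> T' \<longrightarrow> v T \<le> v T')"

(* bidders are 1 and 2; vs i is the valuation of bidder i *)

definition OPT :: "(nat \<Rightarrow> valuation) \<Rightarrow> real" where
  "OPT vs = Max {vs 1 T1 + vs 2 T2 | T1 T2. T1 \<subseteq> {ItemA, ItemB} \<and> T2 \<subseteq> {ItemA, ItemB} \<and> T1 \<inter> T2 = {}}"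

definition grand_welfare :: "bool \<Rightarrow> (nat \<Rightarrow> valuation) \<Rightarrow> real" where
  "grand_welfare tie vs =
     (if vs 1 {ItemA, ItemB} > vs 2 {ItemA, ItemB} \<or> (vs 1 {ItemA, ItemB} = vs 2 {ItemA, ItemB} \<and> tie)
      then vs 1 {ItemA, ItemB} + vs 2 {}
      else vs 2 {ItemA, ItemB} + vs 1 {})"

(* Bidder i first receives item x; then an auction for the remaining item y among both
   bidders, each bidding her marginal value for y given her current bundle; highest bid wins,
   tie = True means bidder i (the holder) wins a tie. *)
definition item_welfare :: "bool \<Rightarrow> (nat \<Rightarrow> valuation) \<Rightarrow> item \<Rightarrow> nat \<Rightarrow> real" where
  "item_welfare tie vs x i =
     (let y = other_item x; j = other_bidder i;
          bid_i = vs i {x, y} - vs i {x};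
          bid_j = vs j {y} - vs j {}
      in if bid_i > bid_j \<or> (bid_i = bid_j \<and> tie)
         then vs i {x, y} + vs j {}
         else vs i {x} + vs j {y})"

definition M3_welfare :: "bool \<Rightarrow> (item \<Rightarrow> nat \<Rightarrow> bool) \<Rightarrow> (nat \<Rightarrow> valuation) \<Rightarrow> real" where
  "M3_welfare tg ti vs =
     1/3 * grand_welfare tg vs +
     2/3 * ((\<Sum>x\<in>{ItemA, ItemB}. \<Sum>i\<in>{1::nat, 2}. item_welfare (ti x i) vs x i) / 4)"

end

theory Submission
  imports Defs
begin

text \<open>
  With truthful marginal bids, the auction for the remaining item picks the better of the two
  allocations "the holder gets both items" and "the items are split". By monotonicity the optimum
  is one of the four allocations that hand out both items. A split optimum is found by the two
  seeds (initial item-bidder pairs) that start it; a bundle optimum by the two seeds that give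
  an item to the bundle's owner. In either case the two remaining seeds and the grand-bundle
  auction together are worth at least the optimum as well, so weights 1/6 per seed and 1/3 for
  the grand bundle give 2/3.
\<close>

lemma item_welfare_eq_max:
  "item_welfare tie vs x i =
     max (vs i {x, other_item x} + vs (other_bidder i) {})
         (vs i {x} + vs (other_bidder i) {other_item x})"
  by (auto simp: item_welfare_def Let_def max_def)

lemma grand_welfare_ge_max:
  assumes "monotone_val (vs 1)" and "monotone_val (vs 2)"
  shows "max (vs 1 {ItemA, ItemB}) (vs 2 {ItemA, ItemB}) \<le> grand_welfare tie vs"
  using assms by (auto simp: grand_welfare_def monotone_val_def intro: add_increasing2)

lemma subset_items_cases:
  assumes "T \<subseteq> {ItemA, ItemB}"
  shows "T = {} \<or> T = {ItemA} \<or> T = {ItemB} \<or> T = {ItemA, ItemB}"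
  using assms item.exhaust by blast

lemma OPT_eq_max_full_allocation:
  assumes "monotone_val (vs 1)" and "monotone_val (vs 2)"
  shows "OPT vs =
     max (max (vs 1 {ItemA, ItemB} + vs 2 {}) (vs 1 {} + vs 2 {ItemA, ItemB}))
         (max (vs 1 {ItemA} + vs 2 {ItemB}) (vs 1 {ItemB} + vs 2 {ItemA}))"
    (is "_ = ?best")
proof -
  let ?S = "{vs 1 T1 + vs 2 T2 | T1 T2.
    T1 \<subseteq> {ItemA, ItemB} \<and> T2 \<subseteq> {ItemA, ItemB} \<and> T1 \<inter> T2 = {}}"
  have mono: "vs k T \<le> vs k T'" if "k \<in> {1, 2}" "T \<subseteq> T'" for k T T'
    using assms that by (auto simp: monotone_val_def)
  have "?S \<subseteq> (\<lambda>(T1, T2). vs 1 T1 + vs 2 T2) ` (Pow {ItemA, ItemB} \<times> Pow {ItemA, ItemB})"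
    by auto
  then have fin: "finite ?S"
    by (rule finite_subset) auto
  have mem: "vs 1 T1 + vs 2 T2 \<in> ?S"
    if "T1 \<subseteq> {ItemA, ItemB}" "T2 \<subseteq> {ItemA, ItemB}" "T1 \<inter> T2 = {}" for T1 T2
    using that by blast
  have le_Max: "vs 1 T1 + vs 2 T2 \<le> Max ?S"
    if "T1 \<subseteq> {ItemA, ItemB}" "T2 \<subseteq> {ItemA, ItemB}" "T1 \<inter> T2 = {}" for T1 T2
    using Max_ge[OF fin mem[OF that]] .
  have "?best \<le> Max ?S"
    using le_Max[of "{ItemA, ItemB}" "{}"] le_Max[of "{}" "{ItemA, ItemB}"]
      le_Max[of "{ItemA}" "{ItemB}"] le_Max[of "{ItemB}" "{ItemA}"]
    by auto
  moreover have "s \<le> ?best" if "s \<in> ?S" for s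
  proof -
    obtain T1 T2 where s: "s = vs 1 T1 + vs 2 T2" and T1: "T1 \<subseteq> {ItemA, ItemB}"
      and T2: "T2 \<subseteq> {ItemA, ItemB}" and disj: "T1 \<inter> T2 = {}"
      using \<open>s \<in> ?S\<close> by blast
    show ?thesis
      using subset_items_cases[OF T1] subset_items_cases[OF T2] disj unfolding s
      by (auto simp: le_max_iff_disj intro: add_mono mono)
  qed
  then have "Max ?S \<le> ?best"
    by (intro Max.boundedI[OF fin]) blast+
  ultimately show ?thesis
    unfolding OPT_def by linarith
qed

lemma OPT_le_auction_welfares:
  assumes "monotone_val (vs 1)" and "monotone_val (vs 2)"
  shows "4 * OPT vs \<le> 2 * grand_welfare tg vs
    + (\<Sum>x\<in>{ItemA, ItemB}. \<Sum>i\<in>{1::nat, 2}. item_welfare (ti x i) vs x i)"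
proof -
  have mono: "vs k {} \<le> vs k {ItemA, ItemB}" "0 \<le> vs k {}"
    "vs k {ItemA} \<le> vs k {ItemA, ItemB}" "vs k {ItemB} \<le> vs k {ItemA, ItemB}"
    if "monotone_val (vs k)" for k
    using that by (auto simp: monotone_val_def)
  let ?G = "grand_welfare tg vs"
  let ?I = "\<lambda>x i. item_welfare (ti x i) vs x i"
  have I: "?I ItemA 1 \<ge> vs 1 {ItemA, ItemB} + vs 2 {}" "?I ItemA 1 \<ge> vs 1 {ItemA} + vs 2 {ItemB}"
    "?I ItemB 1 \<ge> vs 1 {ItemA, ItemB} + vs 2 {}" "?I ItemB 1 \<ge> vs 1 {ItemB} + vs 2 {ItemA}"
    "?I ItemA 2 \<ge> vs 1 {} + vs 2 {ItemA, ItemB}" "?I ItemA 2 \<ge> vs 1 {ItemB} + vs 2 {ItemA}"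
    "?I ItemB 2 \<ge> vs 1 {} + vs 2 {ItemA, ItemB}" "?I ItemB 2 \<ge> vs 1 {ItemA} + vs 2 {ItemB}"
    by (simp_all add: item_welfare_eq_max other_item_def other_bidder_def insert_commute)
  have G: "?G \<ge> vs 1 {ItemA, ItemB}" "?G \<ge> vs 2 {ItemA, ItemB}"
    using grand_welfare_ge_max[OF assms] by auto
  consider "OPT vs = vs 1 {ItemA, ItemB} + vs 2 {}" | "OPT vs = vs 1 {} + vs 2 {ItemA, ItemB}"
    | "OPT vs = vs 1 {ItemA} + vs 2 {ItemB}" | "OPT vs = vs 1 {ItemB} + vs 2 {ItemA}"
    unfolding OPT_eq_max_full_allocation[OF assms] max_def by argo
  then have "4 * OPT vs \<le> 2 * ?G + (?I ItemA 1 + ?I ItemA 2 + ?I ItemB 1 + ?I ItemB 2)"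
  proof cases
    case 1
    then show ?thesis using I(1,3,5,7) G(1) mono[OF assms(1)] mono[OF assms(2)] by linarith
  next
    case 2
    then show ?thesis using I(1,3,5,7) G(2) mono[OF assms(1)] mono[OF assms(2)] by linarith
  next
    case 3
    then show ?thesis using I(2,3,5,8) G mono[OF assms(1)] mono[OF assms(2)] by linarith
  next
    case 4
    then show ?thesis using I(1,4,6,7) G mono[OF assms(1)] mono[OF assms(2)] by linarith
  qed
  then show ?thesis
    by (simp add: add.assoc)
qed

theorem claimB5:
  fixes vs :: "nat \<Rightarrow> valuation" and tg :: bool and ti :: "item \<Rightarrow> nat \<Rightarrow> bool"
  assumes "monotone_val (vs 1)" and "monotone_val (vs 2)"
  shows "M3_welfare tg ti vs \<ge> 2/3 * OPT vs"
  using OPT_le_auction_welfares[OF assms, of tg ti] unfolding M3_welfare_def by linarith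

end
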